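(* Let $G$ be a graph on $n$ vertices with at least two vertex-disjoint edges. If $k \ge \min\{n-1, \Gamma(G)+\gamma(G)\}$, then $D_k(G)$ is connected.
   Context: All graphs are finite and simple. A set $S \subseteq V(G)$ is a dominating set of $G$ if every vertex of $V(G)\setminus S$ is adjacent to a vertex of $S$; it is a minimal dominating set if no proper subset of it is a dominating set. $\gamma(G)$ is the minimum cardinality of a dominating set of $G$, and $\Gamma(G)$ is the maximum cardinality of a minimal dominating set of $G$. For an integer $k \ge \gamma(G)$, the $k$-dominating graph $D_k(G)$ is the graph whose vertices are the dominating sets of $G$ of cardinality at most $k$, with two such sets $A,B$ adjacent if and only if their symmetric difference $(A\setminus B)\cup(B\setminus A)$ consists of exactly one vertex of $G$. *)

theory Defs
  imports Main
begin

definition simple_graph :: "'a set \<Rightarrow> ('a \<Rightarrow> 'a \<Rightarrow> bool) \<Rightarrow> bool" where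
  "simple_graph V E \<longleftrightarrow> finite V \<and>
     (\<forall>u v. E u v \<longrightarrow> u \<in> V \<and> v \<in> V \<and> u \<noteq> v \<and> E v u)"

definition dominating_set :: "'a set \<Rightarrow> ('a \<Rightarrow> 'a \<Rightarrow> bool) \<Rightarrow> 'a set \<Rightarrow> bool" where
  "dominating_set V E S \<longleftrightarrow> S \<subseteq> V \<and> (\<forall>v \<in> V - S. \<exists>u \<in> S. E v u)"

definition minimal_dominating_set :: "'a set \<Rightarrow> ('a \<Rightarrow> 'a \<Rightarrow> bool) \<Rightarrow> 'a set \<Rightarrow> bool" where
  "minimal_dominating_set V E S \<longleftrightarrow> dominating_set V E S \<and>
     (\<forall>T. T \<subset> S \<longrightarrow> \<not> dominating_set V E T)"

definition domination_number :: "'a set \<Rightarrow> ('a \<Rightarrow> 'a \<Rightarrow> bool) \<Rightarrow> nat" where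
  "domination_number V E = Min {card S | S. dominating_set V E S}"

definition upper_domination_number :: "'a set \<Rightarrow> ('a \<Rightarrow> 'a \<Rightarrow> bool) \<Rightarrow> nat" where
  "upper_domination_number V E = Max {card S | S. minimal_dominating_set V E S}"

definition dom_graph_verts :: "'a set \<Rightarrow> ('a \<Rightarrow> 'a \<Rightarrow> bool) \<Rightarrow> nat \<Rightarrow> 'a set set" where
  "dom_graph_verts V E k = {S. dominating_set V E S \<and> card S \<le> k}"

definition dom_graph_adj :: "'a set \<Rightarrow> ('a \<Rightarrow> 'a \<Rightarrow> bool) \<Rightarrow> nat \<Rightarrow> 'a set \<Rightarrow> 'a set \<Rightarrow> bool" where
  "dom_graph_adj V E k A B \<longleftrightarrow> A \<in> dom_graph_verts V E k \<and> B \<in> dom_graph_verts V E k \<and>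
     (\<exists>x. (A - B) \<union> (B - A) = {x})"

definition dom_graph_connected :: "'a set \<Rightarrow> ('a \<Rightarrow> 'a \<Rightarrow> bool) \<Rightarrow> nat \<Rightarrow> bool" where
  "dom_graph_connected V E k \<longleftrightarrow>
     (\<forall>A \<in> dom_graph_verts V E k. \<forall>B \<in> dom_graph_verts V E k. (dom_graph_adj V E k)\<^sup>*\<^sup>* A B)"

end

theory Submission
  imports Defs
begin

(* The basic tool is monotonicity: a dominating set A can be enlarged one vertex at a
   time, so D_k(G) contains a path from A to every superset B of A inside V with
   |B| <= k.  Connectivity then follows once a single "hub" vertex of D_k(G) is
   reachable from every other one.

   Case k >= Gamma + gamma: the hub is a minimum dominating set D.  Any A in D_k(G)
   contains a minimal dominating set A', with |A'| <= Gamma, and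
   A --- A' --- A' u D --- D is a walk of monotone paths since |A' u D| <= Gamma + gamma.

   Case k >= n - 1: the hub is V - {a} for a non-isolated vertex a.  Any A in D_k(G)
   with |A| < n misses some vertex v, and A grows to V - {v}.  Two co-singletons
   V - {u}, V - {v} are joined through V - {u, v} when that set dominates; otherwise one
   of u, v is a pendant vertex, and an edge disjoint from its pendant edge (which the
   hypothesis of two disjoint edges supplies) gives a detour. *)

abbreviation dom_reach :: "'a set \<Rightarrow> ('a \<Rightarrow> 'a \<Rightarrow> bool) \<Rightarrow> nat \<Rightarrow> 'a set \<Rightarrow> 'a set \<Rightarrow> bool" where
  "dom_reach V E k \<equiv> (dom_graph_adj V E k)\<^sup>*\<^sup>*"

lemma dominating_set_superset:
  assumes "dominating_set V E A" "A \<subseteq> B" "B \<subseteq> V"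
  shows "dominating_set V E B"
  using assms unfolding dominating_set_def by blast

lemma dominating_set_Diff:
  assumes "\<forall>x\<in>X. \<exists>y\<in>V - X. E x y"
  shows "dominating_set V E (V - X)"
  using assms unfolding dominating_set_def by auto

lemma dom_reach_sym:
  assumes "dom_reach V E k A B"
  shows "dom_reach V E k B A"
  using assms
proof (induction rule: rtranclp_induct)
  case base
  then show ?case by simp
next
  case (step B C)
  have "dom_graph_adj V E k C B"
    using step(2) unfolding dom_graph_adj_def by (auto simp: Un_commute)
  then show ?case using step(3) by (meson converse_rtranclp_into_rtranclp)
qed

lemma dom_reach_superset:
  assumes fin: "finite V" and dA: "dominating_set V E A"
    and AB: "A \<subseteq> B" and BV: "B \<subseteq> V" and cB: "card B \<le> k"
  shows "dom_reach V E k A B"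
proof -
  have "dom_reach V E k A (A \<union> C)"
    if "finite C" "C \<subseteq> B - A" for C
    using that
  proof (induction C rule: finite_induct)
    case empty
    then show ?case by simp
  next
    case (insert x C)
    have fB: "finite B" using BV fin finite_subset by blast
    have sub: "A \<union> insert x C \<subseteq> B" "A \<union> C \<subseteq> B" using AB insert.prems by auto
    have dom: "dominating_set V E (A \<union> C)" "dominating_set V E (A \<union> insert x C)"
      using dominating_set_superset[OF dA, of "A \<union> C"]
        dominating_set_superset[OF dA, of "A \<union> insert x C"] sub BV by auto
    have "card (A \<union> insert x C) \<le> k" "card (A \<union> C) \<le> k"
      using card_mono[OF fB sub(1)] card_mono[OF fB sub(2)] cB by auto
    moreover have "(A \<union> C - (A \<union> insert x C)) \<union> (A \<union> insert x C - (A \<union> C)) = {x}"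
      using insert.hyps insert.prems by auto
    ultimately have "dom_graph_adj V E k (A \<union> C) (A \<union> insert x C)"
      using dom unfolding dom_graph_adj_def dom_graph_verts_def by blast
    then show ?case using insert by (meson rtranclp.rtrancl_into_rtrancl subset_insertI2 insert_subset)
  qed
  moreover have "finite (B - A)" using BV fin finite_subset by blast
  moreover have "A \<union> (B - A) = B" using AB by auto
  ultimately show ?thesis by (metis order_refl)
qed

lemma dom_graph_connected_hub:
  assumes "\<And>A. A \<in> dom_graph_verts V E k \<Longrightarrow> dom_reach V E k A H"
  shows "dom_graph_connected V E k"
  unfolding dom_graph_connected_def
proof (intro ballI)
  fix A B assume "A \<in> dom_graph_verts V E k" "B \<in> dom_graph_verts V E k"
  then have "dom_reach V E k A H" "dom_reach V E k H B"
    using assms dom_reach_sym by blast+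
  then show "dom_reach V E k A B" by (rule rtranclp_trans)
qed

(* Every dominating set of a finite graph contains a minimal dominating set:
   take a dominating subset of least cardinality. *)
lemma minimal_dominating_subset:
  assumes fin: "finite V" and dA: "dominating_set V E A"
  obtains A' where "A' \<subseteq> A" "minimal_dominating_set V E A'"
proof -
  obtain A' where A': "A' \<subseteq> A \<and> dominating_set V E A'"
    and least: "\<And>T. T \<subseteq> A \<and> dominating_set V E T \<Longrightarrow> card A' \<le> card T"
    using ex_has_least_nat[of "\<lambda>T. T \<subseteq> A \<and> dominating_set V E T" A card] dA by blast
  have finA: "finite A" using dA fin finite_subset unfolding dominating_set_def by blast
  have "\<not> dominating_set V E T" if T: "T \<subset> A'" for T
  proof
    assume "dominating_set V E T"
    then have "card A' \<le> card T" using least T A' by blast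
    moreover have "card T < card A'"
      using T A' finA by (meson psubset_card_mono finite_subset)
    ultimately show False by simp
  qed
  then show ?thesis using that A' unfolding minimal_dominating_set_def by blast
qed

lemma domination_number_attained:
  assumes fin: "finite V"
  obtains D where "dominating_set V E D" "card D = domination_number V E"
proof -
  have "finite {card S | S. dominating_set V E S}"
    by (rule finite_subset[of _ "{..card V}"]) (auto simp: dominating_set_def fin card_mono)
  moreover have "dominating_set V E V" unfolding dominating_set_def by auto
  ultimately have "domination_number V E \<in> {card S | S. dominating_set V E S}"
    unfolding domination_number_def by (intro Min_in) auto
  then show ?thesis using that by auto
qed

lemma card_minimal_dominating_set_le:
  assumes fin: "finite V" and "minimal_dominating_set V E S"
  shows "card S \<le> upper_domination_number V E"
proof -
  have "finite {card S | S. minimal_dominating_set V E S}"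
    by (rule finite_subset[of _ "{..card V}"])
      (auto simp: minimal_dominating_set_def dominating_set_def fin card_mono)
  then show ?thesis unfolding upper_domination_number_def using assms(2) by (auto intro: Max_ge)
qed

lemma dom_graph_connected_Gamma_gamma:
  assumes G: "simple_graph V E"
    and kk: "upper_domination_number V E + domination_number V E \<le> k"
  shows "dom_graph_connected V E k"
proof -
  have fin: "finite V" using G unfolding simple_graph_def by auto
  obtain D where dD: "dominating_set V E D" and cD: "card D = domination_number V E"
    using domination_number_attained[OF fin] by blast
  show ?thesis
  proof (rule dom_graph_connected_hub)
    fix A assume "A \<in> dom_graph_verts V E k"
    then have dA: "dominating_set V E A" and cA: "card A \<le> k"
      unfolding dom_graph_verts_def by auto
    obtain A' where A'A: "A' \<subseteq> A" and mA': "minimal_dominating_set V E A'"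
      using minimal_dominating_subset[OF fin dA] by blast
    have dA': "dominating_set V E A'" using mA' unfolding minimal_dominating_set_def by auto
    have sub: "A \<subseteq> V" "A' \<union> D \<subseteq> V"
      using dA dA' dD unfolding dominating_set_def by auto
    have cU: "card (A' \<union> D) \<le> k"
      using card_Un_le[of A' D] card_minimal_dominating_set_le[OF fin mA'] cD kk by linarith
    have "dom_reach V E k A A'"
      using dom_reach_sym dom_reach_superset[OF fin dA' A'A sub(1) cA] by blast
    also have "dom_reach V E k A' (A' \<union> D)"
      using dom_reach_superset[OF fin dA' _ sub(2) cU] by blast
    also have "dom_reach V E k (A' \<union> D) D"
      using dom_reach_sym dom_reach_superset[OF fin dD _ sub(2) cU] by blast
    finally show "dom_reach V E k A D" .
  qed
qed

lemma dom_reach_co_singletons: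
  assumes fin: "finite V" and kk: "card V - 1 \<le> k" and uv: "u \<in> V" "v \<in> V"
    and d: "dominating_set V E (V - {u, v})"
  shows "dom_reach V E k (V - {u}) (V - {v})"
proof -
  have "dom_reach V E k (V - {u, v}) (V - {x})" if x: "x \<in> {u, v}" for x
  proof (rule dom_reach_superset[OF fin d])
    show "card (V - {x}) \<le> k" using x uv fin kk by (auto simp: card_Diff_singleton)
  qed (use x in auto)
  then have "dom_reach V E k (V - {u}) (V - {u, v})" "dom_reach V E k (V - {u, v}) (V - {v})"
    using dom_reach_sym by blast+
  then show ?thesis by (rule rtranclp_trans)
qed

(* A pendant edge x z (z the only neighbour of x) is bypassed using any edge w y avoiding
   {x, z}: V - {x} --- V - {w} --- V - {z}. *)
lemma dom_reach_pendant:
  assumes G: "simple_graph V E" and kk: "card V - 1 \<le> k"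
    and xz: "E x z" and pendant: "\<forall>y. E x y \<longrightarrow> y = z"
    and wy: "E w y" and avoid: "{w, y} \<inter> {x, z} = {}"
  shows "dom_reach V E k (V - {x}) (V - {z})"
proof -
  have fin: "finite V" and Ep: "\<And>u v. E u v \<Longrightarrow> u \<in> V \<and> v \<in> V \<and> u \<noteq> v \<and> E v u"
    using G unfolding simple_graph_def by blast+
  have "dominating_set V E (V - {x, w})" "dominating_set V E (V - {w, z})"
    using xz wy Ep[OF xz] Ep[OF wy] avoid by (intro dominating_set_Diff; auto)+
  then have "dom_reach V E k (V - {x}) (V - {w})" "dom_reach V E k (V - {w}) (V - {z})"
    using dom_reach_co_singletons[OF fin kk] Ep[OF xz] Ep[OF wy] by (auto simp: insert_commute)
  then show ?thesis by (rule rtranclp_trans)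
qed

(* In a graph with two disjoint edges, every edge x z with x pendant is avoided by one of them:
   an edge through x is x z itself, and z cannot lie on both disjoint edges. *)
lemma edge_avoiding_pendant_edge:
  assumes G: "simple_graph V E"
    and disj: "E a b" "E c d" "{a, b} \<inter> {c, d} = {}"
    and pendant: "\<forall>y. E x y \<longrightarrow> y = z"
  obtains w y where "E w y" "{w, y} \<inter> {x, z} = {}"
proof -
  have through_x: "{p, q} = {x, z}" if "x \<in> {p, q}" "E p q" for p q
  proof -
    have "E q p" using that(2) G unfolding simple_graph_def by blast
    then show ?thesis using that pendant by auto
  qed
  consider "x \<in> {a, b}" | "x \<in> {c, d}" | "x \<notin> {a, b}" "x \<notin> {c, d}" by blast
  then have "{a, b} \<inter> {x, z} = {} \<or> {c, d} \<inter> {x, z} = {}"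
  proof cases
    case 1
    then show ?thesis using through_x[OF 1 disj(1)] disj(3) by auto
  next
    case 2
    then show ?thesis using through_x[OF 2 disj(2)] disj(3) by auto
  next
    case 3
    then show ?thesis using disj(3) by blast
  qed
  then show ?thesis using that disj by blast
qed

(* For k >= n - 1 and two disjoint edges, all co-singletons of non-isolated vertices are
   mutually reachable: either V - {u, v} dominates, or one of u, v is pendant on the other. *)
lemma dom_reach_co_singletons_non_isolated:
  assumes G: "simple_graph V E" and kk: "card V - 1 \<le> k"
    and disj: "E a b" "E c d" "{a, b} \<inter> {c, d} = {}"
    and uu: "E u u'" and vv: "E v v'"
  shows "dom_reach V E k (V - {u}) (V - {v})"
proof -
  have fin: "finite V" and Ep: "\<And>x y. E x y \<Longrightarrow> x \<in> V \<and> y \<in> V \<and> x \<noteq> y \<and> E y x"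
    using G unfolding simple_graph_def by blast+
  have pendant_case: "dom_reach V E k (V - {x}) (V - {z})"
    if xz: "E x z" and pendant: "\<forall>y. E x y \<longrightarrow> y = z" for x z
  proof -
    obtain w y where "E w y" "{w, y} \<inter> {x, z} = {}"
      using edge_avoiding_pendant_edge[OF G disj pendant] .
    then show ?thesis using dom_reach_pendant[OF G kk xz pendant] by blast
  qed
  have uv: "u \<in> V" "v \<in> V" using Ep[OF uu] Ep[OF vv] by auto
  show ?thesis
  proof (cases "\<forall>x\<in>{u, v}. \<exists>y\<in>V - {u, v}. E x y")
    case True
    then show ?thesis
      using dom_reach_co_singletons[OF fin kk uv dominating_set_Diff] by blast
  next
    case False
    then obtain x where x: "x \<in> {u, v}" and no_outside: "\<forall>y\<in>V - {u, v}. \<not> E x y" by blast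
    have only: "y \<in> {u, v} - {x}" if "E x y" for y
      using that no_outside Ep[OF that] by blast
    show ?thesis
    proof (cases "x = u")
      case True
      then have "E u v" "\<forall>y. E u y \<longrightarrow> y = v" using only uu by auto
      then show ?thesis by (rule pendant_case)
    next
      case False
      then have "x = v" using x by auto
      then have "E v u" "\<forall>y. E v y \<longrightarrow> y = u" using only vv by auto
      then show ?thesis using pendant_case dom_reach_sym by blast
    qed
  qed
qed

lemma dom_graph_connected_n_minus_1:
  assumes G: "simple_graph V E"
    and disj: "\<exists>a b c d. E a b \<and> E c d \<and> {a, b} \<inter> {c, d} = {}"
    and kk: "card V - 1 \<le> k"
  shows "dom_graph_connected V E k"
proof -
  have fin: "finite V" using G unfolding simple_graph_def by auto
  obtain a b c d where ab: "E a b" and cd: "E c d" "{a, b} \<inter> {c, d} = {}"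
    using disj by blast
  show ?thesis
  proof (cases "card V \<le> k")
    case True
    show ?thesis
    proof (rule dom_graph_connected_hub)
      fix A assume "A \<in> dom_graph_verts V E k"
      then show "dom_reach V E k A V"
        using dom_reach_superset[OF fin _ _ _ True] unfolding dom_graph_verts_def dominating_set_def
        by auto
    qed
  next
    case False
    show ?thesis
    proof (rule dom_graph_connected_hub)
      fix A assume "A \<in> dom_graph_verts V E k"
      then have dA: "dominating_set V E A" and cA: "card A \<le> k"
        unfolding dom_graph_verts_def by auto
      have AV: "A \<subseteq> V" using dA unfolding dominating_set_def by auto
      moreover have "A \<noteq> V" using cA False by auto
      ultimately obtain v where v: "v \<in> V" "v \<notin> A" by blast
      then obtain v' where vv: "E v v'" using dA unfolding dominating_set_def by blast
      have "A \<subseteq> V - {v}" "V - {v} \<subseteq> V" "card (V - {v}) \<le> k"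
        using AV v fin kk by (auto simp: card_Diff_singleton)
      then have "dom_reach V E k A (V - {v})" by (rule dom_reach_superset[OF fin dA])
      also have "dom_reach V E k (V - {v}) (V - {a})"
        using dom_reach_co_singletons_non_isolated[OF G kk ab cd vv ab] .
      finally show "dom_reach V E k A (V - {a})" .
    qed
  qed
qed

theorem theorem5:
  fixes V :: "'a set" and E :: "'a \<Rightarrow> 'a \<Rightarrow> bool" and k :: nat
  assumes "simple_graph V E"
    and "\<exists>a b c d. E a b \<and> E c d \<and> {a, b} \<inter> {c, d} = {}"
    and "k \<ge> min (card V - 1) (upper_domination_number V E + domination_number V E)"
  shows "dom_graph_connected V E k"
proof (cases "card V - 1 \<le> k")
  case True
  then show ?thesis using dom_graph_connected_n_minus_1[OF assms(1,2)] by blast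
next
  case False
  then have "upper_domination_number V E + domination_number V E \<le> k"
    using assms(3) by (simp add: min_def split: if_splits)
  then show ?thesis using dom_graph_connected_Gamma_gamma[OF assms(1)] by blast
qed

end
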